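(* Let $G$ be an infinite supersoluble group with no elements of order $2$ (no involutions) such that every non-abelian subgroup $H$ of $G$ satisfies $C_G(H)\le H$. Then $G$ is abelian.
   Context: A group is supersoluble if it has a normal series (each term normal in the whole group) with cyclic factors. $C_G(H)$ denotes the centralizer of $H$ in $G$. *)

theory Defs
  imports "HOL-Algebra.Algebra"
begin

definition centralizer :: "('a, 'b) monoid_scheme \<Rightarrow> 'a set \<Rightarrow> 'a set" where
  "centralizer G H = {g \<in> carrier G. \<forall>h\<in>H. g \<otimes>\<^bsub>G\<^esub> h = h \<otimes>\<^bsub>G\<^esub> g}"

definition supersoluble :: "('a, 'b) monoid_scheme \<Rightarrow> bool" where
  "supersoluble G \<longleftrightarrow> (\<exists>Hs :: 'a set list.
      Hs \<noteq> [] \<and> hd Hs = {\<one>\<^bsub>G\<^esub>} \<and> last Hs = carrier G \<and>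
      (\<forall>i < length Hs. Hs ! i \<lhd> G) \<and>
      (\<forall>i. Suc i < length Hs \<longrightarrow> Hs ! i \<subseteq> Hs ! Suc i \<and>
           cyclic_group ((G\<lparr>carrier := Hs ! Suc i\<rparr>) Mod (Hs ! i))))"

end

theory Submission
  imports Defs
begin

(* Every non-abelian subgroup contains the centre. The recurring argument exhibits an element c
   centralizing a non-abelian subgroup <S>, together with a set closed under products that contains
   1, S and the inverses of S but not c. First, no h can invert an element w of infinite order
   (take c = h^2 and S = {w, h^3}). This yields a central element u of infinite order: in the first
   infinite term F<y> of the supersoluble series, F finite, a power of y is conjugated to itself or
   to its inverse by every element. As u lies in every non-abelian subgroup, finite subgroups are
   abelian, so a finite subgroup normalized by h is centralized by h. Finally, if G were not
   abelian, take the first non-central term Z<a> of the series and b with b a b^-1 = z a^k, z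
   central. Then d = z a^(k-1) satisfies b a = a d b and b d b^-1 = d^k, and each case for the
   orders of a and d leads to one of these contradictions. *)

section \<open>Centralizers, powers and conjugation\<close>

context group
begin

lemma inv_mult_cancel_left [simp]:
  "a \<in> carrier G \<Longrightarrow> x \<in> carrier G \<Longrightarrow> inv a \<otimes> (a \<otimes> x) = x"
  by (simp add: m_assoc[symmetric])

lemma mult_inv_cancel_left [simp]:
  "a \<in> carrier G \<Longrightarrow> x \<in> carrier G \<Longrightarrow> a \<otimes> (inv a \<otimes> x) = x"
  by (simp add: m_assoc[symmetric])

lemma subgroup_centralizer:
  assumes "S \<subseteq> carrier G"
  shows "subgroup (centralizer G S) G"
proof (rule subgroupI)
  show "centralizer G S \<subseteq> carrier G" "centralizer G S \<noteq> {}"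
    using assms unfolding centralizer_def by force+
next
  fix g assume "g \<in> centralizer G S"
  then have g: "g \<in> carrier G" "\<And>s. s \<in> S \<Longrightarrow> g \<otimes> s = s \<otimes> g"
    unfolding centralizer_def by auto
  have "inv g \<otimes> s = s \<otimes> inv g" if s: "s \<in> S" for s
  proof -
    have sc: "s \<in> carrier G" using s assms by blast
    have "inv g \<otimes> s = inv g \<otimes> (s \<otimes> g) \<otimes> inv g"
      using g(1) sc by (simp add: m_assoc)
    also have "\<dots> = inv g \<otimes> (g \<otimes> s) \<otimes> inv g" using g(2)[OF s] by simp
    also have "\<dots> = s \<otimes> inv g"
      using g(1) sc by (simp add: m_assoc[symmetric])
    finally show ?thesis .
  qed
  then show "inv g \<in> centralizer G S" using g(1) unfolding centralizer_def by auto
next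
  fix g h assume "g \<in> centralizer G S" "h \<in> centralizer G S"
  then show "g \<otimes> h \<in> centralizer G S"
    using assms unfolding centralizer_def by (auto simp: subsetD) (metis m_assoc subsetD)
qed

lemma commute_int_pow:
  assumes "x \<in> carrier G" "y \<in> carrier G" "x \<otimes> y = y \<otimes> x"
  shows "x [^] (m::int) \<otimes> y [^] (n::int) = y [^] n \<otimes> x [^] m"
proof -
  have "y \<in> centralizer G {x}" using assms unfolding centralizer_def by auto
  then have "y [^] n \<in> centralizer G {x}"
    by (intro subgroup_int_pow_closed subgroup_centralizer) (use assms in auto)
  then have "x \<in> centralizer G {y [^] n}" using assms unfolding centralizer_def by auto
  then have "x [^] m \<in> centralizer G {y [^] n}"
    by (intro subgroup_int_pow_closed subgroup_centralizer) (use assms in auto)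
  then show ?thesis unfolding centralizer_def by auto
qed

lemma centralizer_generate:
  assumes "S \<subseteq> carrier G" "c \<in> carrier G" "\<And>s. s \<in> S \<Longrightarrow> c \<otimes> s = s \<otimes> c"
  shows "c \<in> centralizer G (generate G S)"
proof -
  have "generate G S \<subseteq> centralizer G {c}"
    using assms by (intro generate_subgroup_incl subgroup_centralizer) (auto simp: centralizer_def)
  then show ?thesis using assms(2) unfolding centralizer_def by auto
qed

lemma generate_subset_closed:
  assumes "\<one> \<in> T" "S \<subseteq> T" "\<And>s. s \<in> S \<Longrightarrow> inv s \<in> T"
    and "\<And>x y. x \<in> T \<Longrightarrow> y \<in> T \<Longrightarrow> x \<otimes> y \<in> T"
  shows "generate G S \<subseteq> T"
proof
  fix x assume "x \<in> generate G S"
  then show "x \<in> T" by induction (use assms in auto)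
qed

lemma conj_int_pow:
  assumes "g \<in> carrier G" "x \<in> carrier G"
  shows "g \<otimes> x [^] (n::int) \<otimes> inv g = (g \<otimes> x \<otimes> inv g) [^] n"
proof -
  interpret conj: group_hom G G "\<lambda>x. g \<otimes> x \<otimes> inv g"
    using assms(1) unfolding group_hom_def group_hom_axioms_def hom_def
    by (auto simp: m_assoc is_group)
  show ?thesis using conj.hom_int_pow[OF assms(2)] by simp
qed

lemma conj_eq_self_iff:
  assumes "g \<in> carrier G" "x \<in> carrier G"
  shows "g \<otimes> x \<otimes> inv g = x \<longleftrightarrow> g \<otimes> x = x \<otimes> g"
proof -
  have "g \<otimes> x \<otimes> inv g \<otimes> g = g \<otimes> x" using assms by (simp add: m_assoc)
  then show ?thesis using assms by (metis inv_closed m_closed r_cancel)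
qed

lemma mult_eq_conj_mult:
  "g \<in> carrier G \<Longrightarrow> x \<in> carrier G \<Longrightarrow> g \<otimes> x = (g \<otimes> x \<otimes> inv g) \<otimes> g"
  by (simp add: m_assoc)

lemma int_pow_two: "x \<in> carrier G \<Longrightarrow> x [^] (2::int) = x \<otimes> x"
  using int_pow_mult[of x 1 1] by simp

lemma int_pow_minus_one [simp]: "x \<in> carrier G \<Longrightarrow> x [^] (-1::int) = inv x"
  using int_pow_neg[of x 1] by simp

lemma int_pow_eq_one_iff_ord_0:
  "x \<in> carrier G \<Longrightarrow> ord x = 0 \<Longrightarrow> x [^] (n::int) = \<one> \<longleftrightarrow> n = 0"
  by (simp add: int_pow_eq_id)

lemma ord_int_pow_eq_0:
  assumes "x \<in> carrier G" "ord x = 0" "n \<noteq> 0"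
  shows "ord (x [^] (n::int)) = 0"
  using assms by (simp add: ord_eq_0 int_pow_eq_one_iff_ord_0 int_pow_pow flip: int_pow_int)

lemma inv_neq_self_if_ord_0:
  assumes "x \<in> carrier G" "ord x = 0"
  shows "inv x \<noteq> x"
proof
  assume "inv x = x"
  then have "x [^] (2::int) = \<one>" using r_inv[OF assms(1)] assms(1) by (simp add: int_pow_two)
  then show False using int_pow_eq_one_iff_ord_0[OF assms] by simp
qed

lemma ord_neq_0_finite_subgroup:
  assumes "subgroup H G" "finite H" "x \<in> H"
  shows "ord x \<noteq> 0"
proof -
  have "generate G {x} \<subseteq> H" using assms by (intro generate_subgroup_incl) auto
  moreover have "\<one> \<in> generate G {x}" by (rule generate.one)
  ultimately show ?thesis
    using assms subgroup.mem_carrier generate_pow_card[of x]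
      by (metis card_0_eq empty_iff finite_subset)
qed

lemma int_pow_mod_ord:
  "x \<in> carrier G \<Longrightarrow> x [^] (n mod int (ord x)) = x [^] n"
  by (simp add: int_pow_eq mod_eq_dvd_iff)

lemma pow_card_finite_subgroup:
  assumes "subgroup H G" "finite H" "x \<in> H"
  shows "x [^] card H = \<one>"
proof -
  interpret H: group "G\<lparr>carrier := H\<rparr>" using subgroup_imp_group[OF assms(1)] .
  have "x [^]\<^bsub>G\<lparr>carrier := H\<rparr>\<^esub> order (G\<lparr>carrier := H\<rparr>) = \<one>\<^bsub>G\<lparr>carrier := H\<rparr>\<^esub>"
    using H.pow_order_eq_1 assms(3) by simp
  then show ?thesis unfolding order_def using nat_pow_consistent[of x "card H" H] by simp
qed

lemma int_pow_commuting_prod: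
  fixes m n k :: int
  assumes "x \<in> carrier G" "y \<in> carrier G" "x \<otimes> y = y \<otimes> x"
  shows "(x [^] m \<otimes> y [^] n) [^] k = x [^] (m * k) \<otimes> y [^] (n * k)"
  using int_pow_mult_distrib[OF commute_int_pow[OF assms] int_pow_closed int_pow_closed] assms
  by (simp add: int_pow_pow)

lemma subgroup_int_pow_prod:
  assumes a: "a \<in> carrier G" and d: "d \<in> carrier G" and ad: "a \<otimes> d = d \<otimes> a"
  shows "subgroup {a [^] (x::int) \<otimes> d [^] (z::int) | x z. True} G" (is "subgroup ?F G")
proof (rule subgroupI)
  have mem: "a [^] x \<otimes> d [^] z \<in> ?F" for x z :: int by blast
  show "?F \<subseteq> carrier G" using a d by auto
  show "?F \<noteq> {}" using mem by blast
  fix g h assume "g \<in> ?F" "h \<in> ?F"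
  then obtain x z x' z' :: int where g: "g = a [^] x \<otimes> d [^] z" and h: "h = a [^] x' \<otimes> d [^] z'"
    by blast
  have "inv g = a [^] (- x) \<otimes> d [^] (- z)"
    unfolding g using a d commute_int_pow[OF a d ad, of "- x" "- z"]
    by (simp add: inv_mult_group int_pow_neg)
  then show "inv g \<in> ?F" using mem by simp
  have "g \<otimes> h = a [^] x \<otimes> (d [^] z \<otimes> a [^] x') \<otimes> d [^] z'" unfolding g h using a d
    by (simp add: m_assoc)
  also have "\<dots> = a [^] (x + x') \<otimes> d [^] (z + z')"
    using commute_int_pow[OF a d ad, of x' z, symmetric] a d by (simp add: m_assoc int_pow_mult)
  finally show "g \<otimes> h \<in> ?F" using mem by simp
qed

lemma finite_int_pow_prod:
  assumes a: "a \<in> carrier G" "ord a \<noteq> 0" and d: "d \<in> carrier G" "ord d \<noteq> 0"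
  shows "finite {a [^] (x::int) \<otimes> d [^] (z::int) | x z. True}"
proof -
  have "{a [^] (x::int) \<otimes> d [^] (z::int) | x z. True}
      \<subseteq> (\<lambda>(x, z). a [^] x \<otimes> d [^] z) ` ({0..<int (ord a)} \<times> {0..<int (ord d)})"
  proof
    fix g assume "g \<in> {a [^] (x::int) \<otimes> d [^] (z::int) | x z. True}"
    then obtain x z :: int where "g = a [^] x \<otimes> d [^] z" by blast
    then have "g = a [^] (x mod int (ord a)) \<otimes> d [^] (z mod int (ord d))"
      using int_pow_mod_ord a(1) d(1) by simp
    moreover have "x mod int (ord a) \<in> {0..<int (ord a)}" "z mod int (ord d) \<in> {0..<int (ord d)}"
      using a(2) d(2) by auto
    ultimately show "g \<in> (\<lambda>(x, z). a [^] x \<otimes> d [^] z) ` ({0..<int (ord a)} \<times> {0..<int (ord d)})"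
      by force
  qed
  then show ?thesis using finite_subset by blast
qed

lemma int_pow_prod_exponent_eq:
  fixes m n m' n' :: int
  assumes a: "a \<in> carrier G" "ord a = 0" and d: "d \<in> carrier G" "ord d \<noteq> 0"
    and ad: "a \<otimes> d = d \<otimes> a" and eq: "a [^] m \<otimes> d [^] n = a [^] m' \<otimes> d [^] n'"
  shows "m = m'"
proof -
  let ?Q = "int (ord d)"
  have pow_Q: "(a [^] k \<otimes> d [^] l) [^] ?Q = a [^] (k * ?Q)" for k l :: int
    using int_pow_commuting_prod[OF a(1) d(1) ad, of k l ?Q] a(1) d(1) by (simp add: int_pow_eq_id)
  have "a [^] (m * ?Q) = (a [^] m \<otimes> d [^] n) [^] ?Q" by (rule pow_Q[symmetric])
  also have "\<dots> = (a [^] m' \<otimes> d [^] n') [^] ?Q" by (simp only: eq)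
  also have "\<dots> = a [^] (m' * ?Q)" by (rule pow_Q)
  finally have "int (ord a) dvd m' * ?Q - m * ?Q" using int_pow_eq[OF a(1)] by simp
  then have "(m' - m) * ?Q = 0" using a(2) by (simp add: left_diff_distrib)
  then show ?thesis using d(2) by simp
qed

lemma conj_nat_pow_mem:
  assumes "F \<subseteq> carrier G" "h \<in> carrier G" "\<And>f. f \<in> F \<Longrightarrow> h \<otimes> f \<otimes> inv h \<in> F" "f \<in> F"
  shows "h [^] (n::nat) \<otimes> f \<otimes> inv (h [^] n) \<in> F"
  using assms(4)
proof (induction n arbitrary: f)
  case 0 then show ?case using assms(1) by auto
next
  case (Suc n)
  have "h [^] Suc n \<otimes> f \<otimes> inv (h [^] Suc n) = h [^] n \<otimes> (h \<otimes> f \<otimes> inv h) \<otimes> inv (h [^] n)"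
    using Suc.prems assms(1,2) by (auto simp: m_assoc inv_mult_group)
  then show ?case using Suc.IH[OF assms(3)[OF Suc.prems]] by simp
qed

text \<open>Conjugation by \<open>h\<close> permutes the finite set \<open>F\<close>, and a finite set has only finitely
  many self-maps, so two powers of \<open>h\<close> act alike on \<open>F\<close>.\<close>

lemma pow_centralizes_finite_normalized:
  assumes "finite F" "F \<subseteq> carrier G" "h \<in> carrier G" "\<And>f. f \<in> F \<Longrightarrow> h \<otimes> f \<otimes> inv h \<in> F"
  obtains p :: nat where "p > 0" "\<And>f. f \<in> F \<Longrightarrow> h [^] p \<otimes> f = f \<otimes> h [^] p"
proof -
  let ?conj = "\<lambda>k::nat. restrict (\<lambda>f. h [^] k \<otimes> f \<otimes> inv (h [^] k)) F"
  have "range ?conj \<subseteq> F \<rightarrow>\<^sub>E F" using conj_nat_pow_mem[OF assms(2-4)] by auto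
  moreover have "finite (F \<rightarrow>\<^sub>E F)" using assms(1) by (intro finite_PiE)
  ultimately have "finite (range ?conj)" by (rule finite_subset)
  then have "\<not> inj ?conj" using finite_imageD infinite_UNIV_nat by blast
  then obtain i j where "i \<noteq> j" "?conj i = ?conj j" unfolding inj_def by blast
  then obtain i j where ij: "i < j" "?conj i = ?conj j"
    by (cases "i < j") (auto dest: sym simp: neq_iff)
  show thesis
  proof
    show "j - i > 0" using ij(1) by simp
    fix f assume f: "f \<in> F"
    let ?c = "h [^] i" and ?e = "h [^] (j - i)"
    have fc: "f \<in> carrier G" using f assms(2) by blast
    have "h [^] j = ?c \<otimes> ?e" using ij(1) assms(3) by (simp add: nat_pow_mult)
    then have "?c \<otimes> f \<otimes> inv ?c = ?c \<otimes> (?e \<otimes> f \<otimes> inv ?e) \<otimes> inv ?c"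
      using fun_cong[OF ij(2), of f] f fc assms(3) by (simp add: m_assoc inv_mult_group)
    then have "?e \<otimes> f \<otimes> inv ?e = f" using fc assms(3) by simp
    then show "?e \<otimes> f = f \<otimes> ?e" using conj_eq_self_iff fc assms(3) by simp
  qed
qed

lemma int_pow_conj_mem:
  assumes "finite F" "F \<subseteq> carrier G" "h \<in> carrier G" "\<And>f. f \<in> F \<Longrightarrow> h \<otimes> f \<otimes> inv h \<in> F"
    and "f \<in> F"
  shows "h [^] (m::int) \<otimes> f \<otimes> inv (h [^] m) \<in> F"
proof -
  obtain p :: nat where p: "p > 0" "\<And>f. f \<in> F \<Longrightarrow> h [^] p \<otimes> f = f \<otimes> h [^] p"
    using pow_centralizes_finite_normalized[OF assms(1-4)] by blast
  define q r where "q = m div int p" and "r = m mod int p"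
  let ?k = "(h [^] p) [^] q"
  have fc: "f \<in> carrier G" using assms(2,5) by blast
  have hm: "h [^] m = h [^] nat r \<otimes> ?k"
  proof -
    have "h [^] m = h [^] r \<otimes> h [^] (int p * q)"
      unfolding q_def r_def using assms(3) by (simp flip: int_pow_mult)
    moreover have "h [^] r = h [^] nat r"
      using p(1) int_pow_int[of G h "nat r"] by (simp add: r_def)
    moreover have "h [^] (int p * q) = ?k"
      by (simp only: int_pow_pow[OF assms(3), symmetric] int_pow_int)
    ultimately show ?thesis by simp
  qed
  have "?k \<otimes> f = f \<otimes> ?k"
    using commute_int_pow[of "h [^] p" f q 1] p(2)[OF assms(5)] fc assms(3) by simp
  then have "h [^] m \<otimes> f \<otimes> inv (h [^] m) = h [^] nat r \<otimes> f \<otimes> inv (h [^] nat r)"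
    unfolding hm using fc assms(3) by (simp add: m_assoc inv_mult_group)
  then show ?thesis using conj_nat_pow_mem[OF assms(2-5)] by simp
qed

lemma generate_insert_normalizing:
  assumes "subgroup F G" "finite F" "g \<in> carrier G" "\<And>f. f \<in> F \<Longrightarrow> g \<otimes> f \<otimes> inv g \<in> F"
  shows "generate G (insert g F) \<subseteq> {g [^] (s::int) \<otimes> f | s f. f \<in> F}" (is "_ \<subseteq> ?T")
proof (rule generate_subset_closed)
  have Fc: "F \<subseteq> carrier G" using assms(1) subgroup.subset by blast
  have mem: "g [^] s \<otimes> f \<in> ?T" if "f \<in> F" for s :: int and f using that by blast
  show "\<one> \<in> ?T" using mem[of \<one> 0] assms(1) subgroup.one_closed by fastforce
  show "insert g F \<subseteq> ?T"
    using mem[of \<one> 1] mem[of _ 0] assms(1,3) Fc subgroup.one_closed by fastforce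
  show "inv s \<in> ?T" if "s \<in> insert g F" for s
    using that mem[of \<one> "-1"] mem[of "inv s" 0] assms(1,3) Fc subgroup.one_closed
      subgroup.m_inv_closed by (fastforce simp: int_pow_neg)
  show "x \<otimes> y \<in> ?T" if xT: "x \<in> ?T" and yT: "y \<in> ?T" for x y
  proof -
    obtain s :: int and f where x: "x = g [^] s \<otimes> f" "f \<in> F" using xT by blast
    obtain s' :: int and f' where y: "y = g [^] s' \<otimes> f'" "f' \<in> F" using yT by blast
    let ?f = "g [^] (- s') \<otimes> f \<otimes> inv (g [^] (- s'))"
    have "?f \<in> F" using int_pow_conj_mem[OF assms(2) Fc assms(3,4) x(2)] .
    have fc: "f \<in> carrier G" "f' \<in> carrier G" using x(2) y(2) Fc by auto
    have "x \<otimes> y = g [^] s \<otimes> (g [^] s' \<otimes> (inv (g [^] s') \<otimes> f \<otimes> g [^] s') \<otimes> f')"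
      unfolding x y using fc assms(3) by (simp add: m_assoc)
    also have "\<dots> = g [^] (s + s') \<otimes> (?f \<otimes> f')"
      using fc assms(3) by (simp add: m_assoc int_pow_mult int_pow_neg)
    finally have "x \<otimes> y = g [^] (s + s') \<otimes> (?f \<otimes> f')" .
    with \<open>?f \<in> F\<close> show ?thesis using mem subgroup.m_closed[OF assms(1) _ y(2)] by blast
  qed
qed

lemma finite_generate_insert_normalizing:
  assumes F: "subgroup F G" "finite F" and h: "h \<in> carrier G" "\<And>f. f \<in> F \<Longrightarrow> h \<otimes> f \<otimes> inv h \<in> F"
    and ord: "ord h \<noteq> 0"
  shows "finite (generate G (insert h F))"
proof -
  have "generate G (insert h F) \<subseteq> (\<lambda>(s, f). h [^] s \<otimes> f) ` ({0..<int (ord h)} \<times> F)"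
  proof
    fix x assume "x \<in> generate G (insert h F)"
    then obtain s :: int and f where x: "x = h [^] s \<otimes> f" "f \<in> F"
      using generate_insert_normalizing[OF F h] by blast
    then have "x = h [^] (s mod int (ord h)) \<otimes> f" using int_pow_mod_ord h(1) by simp
    moreover have "s mod int (ord h) \<in> {0..<int (ord h)}" using ord by simp
    ultimately show "x \<in> (\<lambda>(s, f). h [^] s \<otimes> f) ` ({0..<int (ord h)} \<times> F)" using x(2) by force
  qed
  moreover have "finite ((\<lambda>(s, f). h [^] s \<otimes> f) ` ({0..<int (ord h)} \<times> F))" using F(2) by simp
  ultimately show ?thesis by (rule finite_subset)
qed

lemma subgroup_pos_pow_mem:
  assumes H: "subgroup H G" and b: "b \<in> carrier G"
  obtains D :: int where "D > 0" "\<And>y::int. y \<noteq> 0 \<Longrightarrow> b [^] y \<in> H \<Longrightarrow> b [^] D \<in> H"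
proof (cases "\<exists>y::int. y \<noteq> 0 \<and> b [^] y \<in> H")
  case True
  then obtain y :: int where y: "y \<noteq> 0" "b [^] y \<in> H" by blast
  have "b [^] \<bar>y\<bar> \<in> H"
  proof (cases "y > 0")
    case True
    then show ?thesis using y by simp
  next
    case False
    then have "b [^] \<bar>y\<bar> = inv (b [^] y)" using b by (simp add: int_pow_neg)
    then show ?thesis using subgroup.m_inv_closed[OF H y(2)] by simp
  qed
  then show thesis using that[of "\<bar>y\<bar>"] y(1) by simp
next
  case False
  show thesis
  proof (rule that[of 1])
    fix y :: int
    assume "y \<noteq> 0" "b [^] y \<in> H"
    with False show "b [^] (1::int) \<in> H" by blast
  qed simp
qed

lemma conj_int_pow_inverting:
  fixes m a :: int
  assumes h: "h \<in> carrier G" and w: "w \<in> carrier G" and inverts: "h \<otimes> w \<otimes> inv h = inv w"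
  shows "h [^] m \<otimes> w [^] a \<otimes> inv (h [^] m) = w [^] (if even m then a else - a)"
proof -
  let ?r = "h [^] (m mod 2)" and ?k = "(h [^] (2::int)) [^] (m div 2)"
  have "h \<otimes> inv w \<otimes> inv h = inv (h \<otimes> w \<otimes> inv h)" using h w by (simp add: inv_mult_group m_assoc)
  then have inv_inverted: "h \<otimes> inv w \<otimes> inv h = w" using inverts w by simp
  have "h [^] (2::int) \<otimes> w \<otimes> inv (h [^] (2::int)) = h \<otimes> (h \<otimes> w \<otimes> inv h) \<otimes> inv h"
    using h w by (simp add: int_pow_two m_assoc inv_mult_group)
  also have "\<dots> = w" using inverts inv_inverted by simp
  finally have "h [^] (2::int) \<otimes> w = w \<otimes> h [^] (2::int)" using conj_eq_self_iff h w by simp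
  then have "?k \<otimes> w = w \<otimes> ?k" using commute_int_pow[of "h [^] (2::int)" w "m div 2" 1] h w by simp
  then have k: "?k \<otimes> w \<otimes> inv ?k = w" using conj_eq_self_iff[of ?k w] h w by simp
  have "h [^] m = h [^] (m mod 2) \<otimes> h [^] (2 * (m div 2))" using h by (simp flip: int_pow_mult)
  also have "h [^] (2 * (m div 2)) = ?k" by (rule int_pow_pow[OF h, symmetric])
  finally have "h [^] m \<otimes> w \<otimes> inv (h [^] m) = ?r \<otimes> (?k \<otimes> w \<otimes> inv ?k) \<otimes> inv ?r"
    using h w by (simp add: m_assoc inv_mult_group)
  then have reduced: "h [^] m \<otimes> w \<otimes> inv (h [^] m) = ?r \<otimes> w \<otimes> inv ?r" using k by simp
  have "h [^] m \<otimes> w \<otimes> inv (h [^] m) = (if even m then w else inv w)"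
  proof (cases "even m")
    case True
    then have "m mod 2 = 0" by presburger
    then show ?thesis using True reduced h w by simp
  next
    case False
    then have "m mod 2 = 1" by presburger
    then show ?thesis using False reduced inverts h w by simp
  qed
  then have "h [^] m \<otimes> w [^] a \<otimes> inv (h [^] m) = (if even m then w else inv w) [^] a"
    using conj_int_pow[of "h [^] m" w a] h w by simp
  then show ?thesis using w by (simp add: int_pow_inv int_pow_neg)
qed

lemma generate_inverting_subset:
  fixes n :: int
  assumes h: "h \<in> carrier G" and w: "w \<in> carrier G" and inverts: "h \<otimes> w \<otimes> inv h = inv w"
  shows "generate G {w, h [^] n} \<subseteq> {w [^] a \<otimes> h [^] (n * b) | (a::int) (b::int). True}"
    (is "_ \<subseteq> ?T")
proof (rule generate_subset_closed)
  have T: "w [^] a \<otimes> h [^] (n * b) \<in> ?T" for a b :: int by blast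
  show "\<one> \<in> ?T" "{w, h [^] n} \<subseteq> ?T" using T[of 0 0] T[of 1 0] T[of 0 1] h w by auto
  show "inv s \<in> ?T" if "s \<in> {w, h [^] n}" for s
    using that T[of "-1" 0] T[of 0 "-1"] h w by (auto simp: int_pow_neg)
  show "x \<otimes> y \<in> ?T" if xT: "x \<in> ?T" and yT: "y \<in> ?T" for x y
  proof -
    obtain a b :: int where x: "x = w [^] a \<otimes> h [^] (n * b)" using xT by blast
    obtain a' b' :: int where y: "y = w [^] a' \<otimes> h [^] (n * b')" using yT by blast
    have "h [^] (n * b) \<otimes> w [^] a' = w [^] (if even (n * b) then a' else - a') \<otimes> h [^] (n * b)"
      using mult_eq_conj_mult[of "h [^] (n * b)" "w [^] a'"]
        conj_int_pow_inverting[OF h w inverts, of "n * b" a'] h w by simp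
    then obtain a'' :: int where swap: "h [^] (n * b) \<otimes> w [^] a' = w [^] a'' \<otimes> h [^] (n * b)"
      by blast
    have "x \<otimes> y = w [^] a \<otimes> (h [^] (n * b) \<otimes> w [^] a') \<otimes> h [^] (n * b')"
      unfolding x y using h w by (simp add: m_assoc)
    also have "\<dots> = w [^] (a + a'') \<otimes> h [^] (n * (b + b'))"
      unfolding swap using h w by (simp add: m_assoc distrib_left int_pow_mult)
    finally show ?thesis using T[of "a + a''" "b + b'"] by (simp only:)
  qed
qed

lemma int_pow_mem_if_conj_inv_conj:
  fixes t t' :: int
  assumes Z: "subgroup Z G" "\<And>z x. z \<in> Z \<Longrightarrow> x \<in> carrier G \<Longrightarrow> z \<otimes> x = x \<otimes> z"
    and h: "h \<in> carrier G" and y: "y \<in> carrier G"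
    and z: "z \<in> Z" "h \<otimes> y \<otimes> inv h = z \<otimes> y [^] t"
    and z': "z' \<in> Z" "inv h \<otimes> y \<otimes> h = z' \<otimes> y [^] t'"
  shows "y [^] (t * t' - 1) \<in> Z"
proof -
  have zc: "z \<in> carrier G" "z' \<in> carrier G"
    using subgroup.mem_carrier[OF Z(1) z(1)] subgroup.mem_carrier[OF Z(1) z'(1)] by auto
  let ?w = "z \<otimes> z' [^] t"
  have wc: "?w \<in> carrier G" using zc by simp
  have "inv h \<otimes> y [^] t \<otimes> h = (z' \<otimes> y [^] t') [^] t"
    using conj_int_pow[of "inv h" y t] z'(2) h y by simp
  also have "\<dots> = z' [^] t \<otimes> y [^] (t * t')"
    using int_pow_mult_distrib[of z' "y [^] t'" t] Z(2)[OF z'(1)] zc y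
    by (simp add: int_pow_pow mult.commute)
  finally have conj_back: "inv h \<otimes> y [^] t \<otimes> h = z' [^] t \<otimes> y [^] (t * t')" .
  have zh: "inv h \<otimes> z = z \<otimes> inv h" using Z(2)[OF z(1) inv_closed[OF h]] by simp
  have "y = inv h \<otimes> (h \<otimes> y \<otimes> inv h) \<otimes> h" using h y by (simp add: m_assoc)
  also have "\<dots> = z \<otimes> (inv h \<otimes> y [^] t \<otimes> h)"
    unfolding z(2) using zh zc h y by (simp add: m_assoc[symmetric])
  also have "\<dots> = ?w \<otimes> y [^] (t * t')" unfolding conj_back using zc y by (simp add: m_assoc)
  finally have "y [^] (t * t') = inv ?w \<otimes> y"
    using inv_solve_left[OF int_pow_closed[OF y] wc y, THEN iffD2] by simp
  then have "y [^] (t * t' - 1) = inv ?w" using y wc by (simp add: int_pow_diff m_assoc)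
  moreover have "?w \<in> Z"
    using subgroup.m_closed[OF Z(1) z(1) subgroup_int_pow_closed[OF Z(1) z'(1)]] .
  ultimately show ?thesis using subgroup.m_inv_closed[OF Z(1)] by simp
qed

lemma conj_exponent_sign:
  fixes t t' :: int
  assumes u: "u \<in> carrier G" "ord u = 0" and h: "h \<in> carrier G"
    and "h \<otimes> u \<otimes> inv h = u [^] t" "inv h \<otimes> u \<otimes> h = u [^] t'"
  shows "t = 1 \<or> t = -1"
proof -
  have "u [^] (t * t' - 1) \<in> {\<one>}"
    by (rule int_pow_mem_if_conj_inv_conj[OF triv_subgroup _ h u(1), of \<one> t \<one> t'])
      (use assms in auto)
  then have "t * t' = 1" using int_pow_eq_one_iff_ord_0[OF u] by simp
  then show ?thesis by (rule pos_zmult_eq_1_iff_lemma)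
qed

lemma conj_eq_central_mult_pow:
  fixes k :: int
  assumes a: "a \<in> carrier G" and b: "b \<in> carrier G"
    and z: "z \<in> carrier G" "\<And>x. x \<in> carrier G \<Longrightarrow> z \<otimes> x = x \<otimes> z"
    and conj: "b \<otimes> a \<otimes> inv b = z \<otimes> a [^] k"
  defines "d \<equiv> z \<otimes> a [^] (k - 1)"
  shows "b \<otimes> a = a \<otimes> d \<otimes> b" "a \<otimes> d = d \<otimes> a" "b \<otimes> d \<otimes> inv b = d [^] k"
proof -
  have "a [^] (k - 1) = inv a \<otimes> a [^] k" using int_pow_mult[OF a, of "-1" k] a by simp
  then have "d = inv a \<otimes> (z \<otimes> a [^] k)"
    unfolding d_def using z(2)[OF inv_closed[OF a]] a z(1) by (simp add: m_assoc[symmetric])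
  then have "d = inv a \<otimes> (b \<otimes> a \<otimes> inv b)" unfolding conj .
  then show "b \<otimes> a = a \<otimes> d \<otimes> b" using a b by (simp add: m_assoc)
  have "a \<otimes> d = z \<otimes> (a \<otimes> a [^] (k - 1))"
    unfolding d_def using z(2)[OF a, symmetric] a z(1) by (simp add: m_assoc[symmetric])
  also have "\<dots> = d \<otimes> a"
    unfolding d_def using commute_int_pow[OF a a refl, of 1 "k - 1"] a z(1) by (simp add: m_assoc)
  finally show "a \<otimes> d = d \<otimes> a" .
  have "b \<otimes> d \<otimes> inv b = z \<otimes> (b \<otimes> a [^] (k - 1) \<otimes> inv b)"
    unfolding d_def using z(2)[OF b] a b z(1) by (simp add: m_assoc[symmetric])
  also have "\<dots> = z \<otimes> (z [^] (1::int) \<otimes> a [^] k) [^] (k - 1)"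
    using conj_int_pow[OF b a, of "k - 1"] conj z(1) by simp
  also have "\<dots> = z [^] (1::int) \<otimes> z [^] (k - 1) \<otimes> a [^] (k * (k - 1))"
    using int_pow_commuting_prod[OF z(1) a z(2)[OF a], of 1 k "k - 1"] a z(1) by (simp add: m_assoc)
  also have "\<dots> = (z [^] (1::int) \<otimes> a [^] (k - 1)) [^] k"
    using int_pow_commuting_prod[OF z(1) a z(2)[OF a], of 1 "k - 1" k] z(1)
      int_pow_mult[OF z(1), of 1 "k - 1", symmetric] by (simp add: mult.commute)
  finally show "b \<otimes> d \<otimes> inv b = d [^] k" unfolding d_def using z(1) by simp
qed

end

section \<open>Normal series with cyclic factors\<close>

context group
begin

lemma conj_pow_card_eq:
  fixes t :: int
  assumes F: "F \<lhd> G" "finite F" and v: "v \<in> carrier G" "\<And>f. f \<in> F \<Longrightarrow> v \<otimes> f = f \<otimes> v"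
    and h: "h \<in> carrier G" "h \<otimes> v \<otimes> inv h \<in> F #> v [^] t"
  shows "h \<otimes> v [^] int (card F) \<otimes> inv h = (v [^] int (card F)) [^] t"
proof -
  interpret F: normal F G by (rule F(1))
  let ?K = "int (card F)"
  obtain f where f: "f \<in> F" "h \<otimes> v \<otimes> inv h = f \<otimes> v [^] t" using h(2) unfolding r_coset_def by blast
  have fc: "f \<in> carrier G" using f(1) F.subset by blast
  have fv: "f \<otimes> v [^] t = v [^] t \<otimes> f"
    using commute_int_pow[OF v(1) fc v(2)[OF f(1)], of t 1] fc by simp
  have fK: "f [^] ?K = \<one>"
    using pow_card_finite_subgroup[OF F.subgroup_axioms F(2) f(1)] by (simp add: int_pow_int)
  have "h \<otimes> v [^] ?K \<otimes> inv h = (h \<otimes> v \<otimes> inv h) [^] ?K" by (rule conj_int_pow[OF h(1) v(1)])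
  also have "\<dots> = f [^] ?K \<otimes> (v [^] t) [^] ?K"
    unfolding f(2) using int_pow_mult_distrib[OF fv fc] v(1) by simp
  also have "\<dots> = (v [^] ?K) [^] t" using fK v(1) by (simp add: int_pow_pow mult.commute)
  finally show ?thesis .
qed

lemma ord_eq_0_if_rcosets_cover:
  assumes F: "finite F" and y: "y \<in> carrier G" and N: "infinite N"
    and cover: "\<forall>n\<in>N. \<exists>t::int. n \<in> F #> y [^] t"
  shows "ord y = 0"
proof (rule ccontr)
  assume ord: "ord y \<noteq> 0"
  have "N \<subseteq> (\<lambda>(f, s). f \<otimes> y [^] s) ` (F \<times> {0..<int (ord y)})"
  proof
    fix n assume "n \<in> N"
    then obtain t :: int where "n \<in> F #> y [^] t" using cover by blast
    then obtain f where "f \<in> F" "n = f \<otimes> y [^] (t mod int (ord y))"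
      unfolding r_coset_def using int_pow_mod_ord[OF y, of t] by auto
    moreover have "t mod int (ord y) \<in> {0..<int (ord y)}" using ord by simp
    ultimately show "n \<in> (\<lambda>(f, s). f \<otimes> y [^] s) ` (F \<times> {0..<int (ord y)})" by force
  qed
  moreover have "finite ((\<lambda>(f, s). f \<otimes> y [^] s) ` (F \<times> {0..<int (ord y)}))" using F by simp
  ultimately show False using finite_subset N by blast
qed

lemma cyclic_factor_generator:
  assumes Z: "Z \<lhd> G" and N: "subgroup N G" "Z \<subseteq> N"
    and cyc: "cyclic_group ((G\<lparr>carrier := N\<rparr>) Mod Z)"
  shows "\<exists>a\<in>N. \<forall>n\<in>N. \<exists>t::int. n \<in> Z #> a [^] t"
proof -
  let ?N = "G\<lparr>carrier := N\<rparr>"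
  interpret N: group ?N using subgroup_imp_group[OF N(1)] .
  have nZ: "Z \<lhd> ?N" by (rule normal_restrict_supergroup[OF N(1) Z N(2)])
  interpret Q: group "?N Mod Z" using normal.factorgroup_is_group[OF nZ] .
  obtain A where A: "A \<in> carrier (?N Mod Z)"
      "carrier (?N Mod Z) = range (\<lambda>t::int. A [^]\<^bsub>?N Mod Z\<^esub> t)"
    using cyc Q.cyclic_group by blast
  obtain a where a: "a \<in> N" "A = Z #>\<^bsub>?N\<^esub> a" using A(1) unfolding carrier_FactGroup by auto
  show ?thesis
  proof (intro bexI[OF _ a(1)] ballI)
    fix n assume n: "n \<in> N"
    have "Z #>\<^bsub>?N\<^esub> n \<in> carrier (?N Mod Z)" using n unfolding carrier_FactGroup by auto
    then obtain t :: int where "Z #>\<^bsub>?N\<^esub> n = A [^]\<^bsub>?N Mod Z\<^esub> t" using A(2) by auto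
    also have "\<dots> = Z #>\<^bsub>?N\<^esub> (a [^]\<^bsub>?N\<^esub> t)"
      unfolding a(2) using normal.FactGroup_int_pow[OF nZ] a(1) by simp
    finally have "Z #> n = Z #> a [^] t" using int_pow_consistent[OF N(1) a(1)] by simp
    then have "n \<in> Z #> a [^] t"
      using rcos_self[OF subgroup.mem_carrier[OF N(1) n] normal_imp_subgroup[OF Z]] by simp
    then show "\<exists>t::int. n \<in> Z #> a [^] t" by blast
  qed
qed

end

lemma (in normal) conj_int_pow_mem_rcos:
  fixes t n :: int
  assumes h: "h \<in> carrier G" and y: "y \<in> carrier G" and conj: "h \<otimes> y \<otimes> inv h \<in> H #> y [^] t"
  shows "h \<otimes> y [^] n \<otimes> inv h \<in> H #> (y [^] n) [^] t"
proof -
  let ?x = "h \<otimes> y \<otimes> inv h"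
  have "H #> ?x = H #> y [^] t" using repr_independence[OF conj _ subgroup_axioms] y by simp
  then have "H #> ?x [^] n = H #> (y [^] t) [^] n"
    using FactGroup_int_pow h y by (metis int_pow_closed m_closed inv_closed)
  moreover have "?x [^] n = h \<otimes> y [^] n \<otimes> inv h" using conj_int_pow[OF h y] by simp
  moreover have "(y [^] t) [^] n = (y [^] n) [^] t" using y by (simp add: int_pow_pow mult.commute)
  ultimately show ?thesis
    using rcos_self[OF _ subgroup_axioms, of "h \<otimes> y [^] n \<otimes> inv h"] h y by simp
qed

lemma supersoluble_chain_step:
  assumes "supersoluble G" "\<not> P {\<one>\<^bsub>G\<^esub>}" "P (carrier G)"
  obtains Z N where "Z \<lhd> G" "N \<lhd> G" "Z \<subseteq> N" "cyclic_group ((G\<lparr>carrier := N\<rparr>) Mod Z)"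
    "\<not> P Z" "P N"
proof -
  obtain Hs :: "'a set list" where Hs: "Hs \<noteq> []" "hd Hs = {\<one>\<^bsub>G\<^esub>}" "last Hs = carrier G"
    "\<And>i. i < length Hs \<Longrightarrow> Hs ! i \<lhd> G"
    "\<And>i. Suc i < length Hs \<Longrightarrow>
      Hs ! i \<subseteq> Hs ! Suc i \<and> cyclic_group ((G\<lparr>carrier := Hs ! Suc i\<rparr>) Mod (Hs ! i))"
    using assms(1) unfolding supersoluble_def by blast
  have ex: "\<exists>i. i < length Hs \<and> P (Hs ! i)"
    using Hs(1,3) assms(3) by (auto simp: last_conv_nth intro!: exI[of _ "length Hs - 1"])
  define i where "i = (LEAST i. i < length Hs \<and> P (Hs ! i))"
  have i: "i < length Hs" "P (Hs ! i)" using LeastI_ex[OF ex] unfolding i_def by auto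
  have below: "\<not> P (Hs ! k)" if "k < i" for k
    using not_less_Least[OF that[unfolded i_def]] that i(1) unfolding i_def by auto
  have "i \<noteq> 0"
  proof
    assume "i = 0"
    then show False using i(2) Hs(1,2) assms(2) by (simp add: hd_conv_nth)
  qed
  then obtain j where j: "i = Suc j" by (cases i) auto
  show thesis
    using that[of "Hs ! j" "Hs ! i"] Hs(4,5)[of j] Hs(4)[of i] i below[of j] j by auto
qed

section \<open>Commutator triples\<close>

locale commutator_triple = group +
  fixes a b d
  assumes a_closed [simp]: "a \<in> carrier G" and b_closed [simp]: "b \<in> carrier G"
    and d_closed [simp]: "d \<in> carrier G"
    and commutator: "b \<otimes> a = a \<otimes> d \<otimes> b"
    and ad_commute: "a \<otimes> d = d \<otimes> a" and bd_commute: "b \<otimes> d = d \<otimes> b"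
begin

definition word :: "int \<Rightarrow> int \<Rightarrow> int \<Rightarrow> 'a" where
  "word x y z = a [^] x \<otimes> b [^] y \<otimes> d [^] z"

lemma word_closed [simp]: "word x y z \<in> carrier G"
  unfolding word_def by simp

lemma word_generators: "word x 0 0 = a [^] x" "word 0 y 0 = b [^] y" "word 0 0 z = d [^] z"
  unfolding word_def by simp_all

lemma int_pow_b_int_pow_a:
  fixes x y :: int
  shows "b [^] y \<otimes> a [^] x = a [^] x \<otimes> b [^] y \<otimes> d [^] (x * y)"
proof -
  have "inv a \<otimes> b \<otimes> a = d \<otimes> b" using commutator by (simp add: m_assoc)
  then have "inv a \<otimes> b [^] y \<otimes> a = d [^] y \<otimes> b [^] y"
    using conj_int_pow[of "inv a" b y] int_pow_mult_distrib[OF bd_commute[symmetric], of y] by simp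
  then have "b [^] y \<otimes> a = a \<otimes> (d [^] y \<otimes> b [^] y)"
    using inv_solve_left'[of "d [^] y \<otimes> b [^] y" a "b [^] y \<otimes> a"] by (simp add: m_assoc)
  then have "b [^] y \<otimes> a \<otimes> inv (b [^] y) = a \<otimes> d [^] y" by (simp add: m_assoc)
  then have "b [^] y \<otimes> a [^] x \<otimes> inv (b [^] y) = (a \<otimes> d [^] y) [^] x"
    using conj_int_pow[of "b [^] y" a x] by simp
  also have "\<dots> = a [^] x \<otimes> d [^] (x * y)"
    using int_pow_mult_distrib[of a "d [^] y" x]
      commute_int_pow[OF a_closed d_closed ad_commute, of 1 y]
    by (simp add: int_pow_pow mult.commute)
  finally have "b [^] y \<otimes> a [^] x = a [^] x \<otimes> d [^] (x * y) \<otimes> b [^] y"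
    using mult_eq_conj_mult[of "b [^] y" "a [^] x"] by simp
  also have "\<dots> = a [^] x \<otimes> b [^] y \<otimes> d [^] (x * y)"
    using commute_int_pow[OF d_closed b_closed bd_commute[symmetric], of "x * y" y]
      by (simp add: m_assoc)
  finally show ?thesis .
qed

lemma word_mult: "word x y z \<otimes> word x' y' z' = word (x + x') (y + y') (z + z' + x' * y)"
proof -
  have da: "d [^] z \<otimes> a [^] x' = a [^] x' \<otimes> d [^] z"
    by (rule commute_int_pow[OF d_closed a_closed ad_commute[symmetric]])
  have db: "d [^] w \<otimes> b [^] y' = b [^] y' \<otimes> d [^] w" for w :: int
    by (rule commute_int_pow[OF d_closed b_closed bd_commute[symmetric]])
  have "word x y z \<otimes> word x' y' z' = a [^] x \<otimes> b [^] y \<otimes> (d [^] z \<otimes> a [^] x') \<otimes> b [^] y' \<otimes> d [^] z'"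
    unfolding word_def by (simp add: m_assoc)
  also have "\<dots> = a [^] x \<otimes> (b [^] y \<otimes> a [^] x') \<otimes> (d [^] z \<otimes> b [^] y') \<otimes> d [^] z'"
    unfolding da by (simp add: m_assoc)
  also have "\<dots> = a [^] x \<otimes> (a [^] x' \<otimes> b [^] y \<otimes> d [^] (x' * y)) \<otimes> (b [^] y' \<otimes> d [^] z) \<otimes> d [^] z'"
    unfolding int_pow_b_int_pow_a db ..
  also have "\<dots> = a [^] x \<otimes> a [^] x' \<otimes> b [^] y \<otimes> (d [^] (x' * y) \<otimes> b [^] y') \<otimes> d [^] z \<otimes> d [^] z'"
    by (simp add: m_assoc)
  also have "\<dots> = a [^] x \<otimes> a [^] x' \<otimes> b [^] y \<otimes> (b [^] y' \<otimes> d [^] (x' * y)) \<otimes> d [^] z \<otimes> d [^] z'"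
    unfolding db ..
  also have "\<dots> = a [^] (x + x') \<otimes> b [^] (y + y') \<otimes> d [^] (x' * y + z + z')"
    by (simp add: int_pow_mult m_assoc)
  also have "\<dots> = word (x + x') (y + y') (z + z' + x' * y)"
    unfolding word_def by (simp add: ac_simps)
  finally show ?thesis .
qed

lemma int_pow_a_int_pow_b_commute_iff:
  fixes R :: int
  shows "a [^] R \<otimes> b [^] R = b [^] R \<otimes> a [^] R \<longleftrightarrow> d [^] (R * R) = \<one>"
  using int_pow_b_int_pow_a[of R R] by (simp add: m_assoc)

lemma generate_pow_subset_words:
  fixes R :: int
  shows "generate G {a [^] R, b [^] R} \<subseteq> {word x y z | x y z. R dvd x \<and> R dvd y \<and> R * R dvd z}"
    (is "_ \<subseteq> ?T")
proof (rule generate_subset_closed)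
  have T: "word x y z \<in> ?T" if "R dvd x" "R dvd y" "R * R dvd z" for x y z using that by blast
  show "\<one> \<in> ?T" "{a [^] R, b [^] R} \<subseteq> ?T"
    using T[of 0 0 0] T[of R 0 0] T[of 0 R 0] by (auto simp: word_generators)
  show "inv s \<in> ?T" if "s \<in> {a [^] R, b [^] R}" for s
    using that T[of "- R" 0 0] T[of 0 "- R" 0] by (auto simp: word_generators int_pow_neg)
  show "x \<otimes> y \<in> ?T" if xT: "x \<in> ?T" and yT: "y \<in> ?T" for x y
  proof -
    obtain x1 y1 z1 where 1: "x = word x1 y1 z1" "R dvd x1" "R dvd y1" "R * R dvd z1"
      using xT by blast
    obtain x2 y2 z2 where 2: "y = word x2 y2 z2" "R dvd x2" "R dvd y2" "R * R dvd z2"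
      using yT by blast
    have "R * R dvd x2 * y1" using 1 2 by (simp add: mult_dvd_mono)
    then show ?thesis unfolding 1(1) 2(1) word_mult using 1 2 T by simp
  qed
qed

definition ad_products :: "'a set" where
  "ad_products = {a [^] (g::int) \<otimes> d [^] (h::int) | g h. True}"

lemma subgroup_ad_products: "subgroup ad_products G"
  unfolding ad_products_def by (rule subgroup_int_pow_prod[OF a_closed d_closed ad_commute])

text \<open>Write \<open>a\<^sup>q = a\<^sup>x b\<^sup>y d\<^sup>z\<close> with \<open>R\<close> dividing \<open>x\<close> and \<open>y\<close>. Then \<open>b\<^sup>y = a\<^sup>q\<^sup>-\<^sup>x d\<^sup>-\<^sup>z\<close>, and
  comparing exponents of \<open>a\<close> in \<open>(b\<^sup>y)\<^sup>D = (b\<^sup>D)\<^sup>y\<close> shows that \<open>R\<close> divides \<open>(q - x) D\<close>.\<close>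

lemma dvd_if_int_pow_a_mem_generate:
  fixes q R D :: int
  assumes a0: "ord a = 0" and d0: "ord d \<noteq> 0" and coprime: "coprime R D"
    and D: "\<And>y::int. y \<noteq> 0 \<Longrightarrow> b [^] y \<in> ad_products \<Longrightarrow> b [^] D \<in> ad_products"
    and mem: "a [^] q \<in> generate G {a [^] R, b [^] R}"
  shows "R dvd q"
proof -
  have a_exp: "g = g'" if "a [^] g \<otimes> d [^] h = a [^] g' \<otimes> d [^] h'" for g h g' h' :: int
    using int_pow_prod_exponent_eq[OF a_closed a0 d_closed d0 ad_commute that] .
  obtain x y z where w: "a [^] q = word x y z" "R dvd x" "R dvd y"
    using generate_pow_subset_words mem by blast
  have "b [^] y = inv (a [^] x) \<otimes> (a [^] x \<otimes> b [^] y \<otimes> d [^] z) \<otimes> inv (d [^] z)"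
    by (simp add: m_assoc)
  also have "\<dots> = inv (a [^] x) \<otimes> a [^] q \<otimes> inv (d [^] z)"
    using w(1) unfolding word_def by (simp only:)
  also have "\<dots> = a [^] (- x + q) \<otimes> d [^] (- z)"
    by (simp only: int_pow_mult[OF a_closed] int_pow_neg[OF a_closed] int_pow_neg[OF d_closed])
  finally have b_pow: "b [^] y = a [^] (- x + q) \<otimes> d [^] (- z)" .
  have "R dvd (- x + q) * D"
  proof (cases "y = 0")
    case True
    then have "a [^] (- x + q) \<otimes> d [^] (- z) = a [^] (0::int) \<otimes> d [^] (0::int)" using b_pow by simp
    then show ?thesis using a_exp by fastforce
  next
    case False
    have "b [^] y \<in> ad_products" unfolding ad_products_def b_pow by blast
    then obtain g h :: int where gh: "b [^] D = a [^] g \<otimes> d [^] h"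
      using D[OF False] unfolding ad_products_def by blast
    have "a [^] ((- x + q) * D) \<otimes> d [^] (- z * D) = (b [^] y) [^] D"
      unfolding b_pow by (rule int_pow_commuting_prod[OF a_closed d_closed ad_commute, symmetric])
    also have "\<dots> = (b [^] D) [^] y" by (simp add: int_pow_pow mult.commute)
    also have "\<dots> = a [^] (g * y) \<otimes> d [^] (h * y)"
      unfolding gh by (rule int_pow_commuting_prod[OF a_closed d_closed ad_commute])
    finally have "(- x + q) * D = g * y" by (rule a_exp)
    then show ?thesis using w(3) by simp
  qed
  then have "R dvd - x + q" using coprime coprime_dvd_mult_left_iff by blast
  then show "R dvd q" using dvd_add[OF _ w(2)] by fastforce
qed

lemma d_pow_trivial_if_word_central:
  fixes x y w :: int
  assumes "a [^] x \<otimes> b [^] y = d [^] w"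
  shows "d [^] x = \<one>" "d [^] y = \<one>"
proof -
  have X: "word x y 0 = d [^] w" using assms unfolding word_def by simp
  have "word x y 0 \<otimes> word 1 0 0 = word 1 0 0 \<otimes> word x y 0"
    unfolding X word_generators
      using commute_int_pow[OF d_closed a_closed ad_commute[symmetric], of w 1]
    by simp
  then have "a [^] (x + 1) \<otimes> b [^] y \<otimes> d [^] y = a [^] (x + 1) \<otimes> b [^] y \<otimes> d [^] (0::int)"
    unfolding word_mult by (simp add: word_def add.commute)
  then show "d [^] y = \<one>" by simp
  have "word x y 0 \<otimes> word 0 1 0 = word 0 1 0 \<otimes> word x y 0"
    unfolding X word_generators
      using commute_int_pow[OF d_closed b_closed bd_commute[symmetric], of w 1]
    by simp
  then have "a [^] x \<otimes> b [^] (y + 1) \<otimes> d [^] (0::int) = a [^] x \<otimes> b [^] (y + 1) \<otimes> d [^] x"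
    unfolding word_mult by (simp add: word_def add.commute)
  then show "d [^] x = \<one>" by simp
qed

end

section \<open>Groups whose non-abelian subgroups are self-centralizing\<close>

locale self_centralizing_group = group +
  assumes centralizer_subset:
      "\<lbrakk>subgroup H G; x \<in> H; y \<in> H; x \<otimes> y \<noteq> y \<otimes> x\<rbrakk> \<Longrightarrow> centralizer G H \<subseteq> H"
    and no_involution: "\<lbrakk>x \<in> carrier G; x [^] (2::nat) = \<one>\<rbrakk> \<Longrightarrow> x = \<one>"
begin

lemma mem_generate_if_centralizes:
  assumes "S \<subseteq> carrier G" "p \<in> S" "q \<in> S" "p \<otimes> q \<noteq> q \<otimes> p"
    and "c \<in> carrier G" "\<And>s. s \<in> S \<Longrightarrow> c \<otimes> s = s \<otimes> c"
  shows "c \<in> generate G S"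
proof -
  have "p \<in> generate G S" "q \<in> generate G S" using assms(2,3) by (auto intro: generate.incl)
  then have "centralizer G (generate G S) \<subseteq> generate G S"
    using centralizer_subset[OF generate_is_subgroup[OF assms(1)] _ _ assms(4)] by blast
  then show ?thesis using centralizer_generate[OF assms(1,5,6)] by blast
qed

lemma odd_ord:
  assumes "x \<in> carrier G" "ord x \<noteq> 0"
  shows "odd (ord x)"
proof
  assume "even (ord x)"
  then obtain m where m: "ord x = 2 * m" by blast
  have "(x [^] m) [^] (2::nat) = x [^] ord x"
    using assms(1) m by (simp add: nat_pow_pow mult.commute)
  then have "(x [^] m) [^] (2::nat) = \<one>" using assms(1) by simp
  then have "x [^] m = \<one>" using no_involution assms(1) by simp
  then have "2 * m dvd m" using pow_eq_id[OF assms(1)] m by simp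
  then show False using m assms(2) by simp
qed

lemma ord_eq_0_if_inverts:
  assumes h: "h \<in> carrier G" and w: "w \<in> carrier G" "ord w = 0"
    and inverts: "h \<otimes> w \<otimes> inv h = inv w"
  shows "ord h = 0"
proof (rule ccontr)
  assume "ord h \<noteq> 0"
  then have "odd (int (ord h))" using odd_ord h by simp
  then have "h [^] int (ord h) \<otimes> w \<otimes> inv (h [^] int (ord h)) = inv w"
    using conj_int_pow_inverting[OF h w(1) inverts, of "int (ord h)" 1] w(1) by simp
  from this[symmetric] have "inv w = w" using h w(1) by (simp add: int_pow_int)
  with inv_neq_self_if_ord_0 w show False by blast
qed

text \<open>If \<open>h\<close> inverted \<open>w\<close>, the non-abelian subgroup generated by \<open>w\<close> and \<open>h\<^sup>3\<close> would be
  centralized by \<open>h\<^sup>2\<close>, but it only contains elements \<open>w\<^sup>a h\<^sup>3\<^sup>b\<close>.\<close>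

lemma ord_neq_0_if_inverted:
  assumes h: "h \<in> carrier G" and w: "w \<in> carrier G" and inverts: "h \<otimes> w \<otimes> inv h = inv w"
  shows "ord w \<noteq> 0"
proof
  assume w0: "ord w = 0"
  have h0: "ord h = 0" by (rule ord_eq_0_if_inverts[OF h w w0 inverts])
  have conj: "h [^] m \<otimes> w [^] a \<otimes> inv (h [^] m) = w [^] (if even m then a else - a)" for m a :: int
    by (rule conj_int_pow_inverting[OF h w inverts])
  have "h [^] (2::int) \<in> generate G {w, h [^] (3::int)}"
  proof (rule mem_generate_if_centralizes)
    show "w \<otimes> h [^] (3::int) \<noteq> h [^] (3::int) \<otimes> w"
    proof
      assume "w \<otimes> h [^] (3::int) = h [^] (3::int) \<otimes> w"
      then have "h [^] (3::int) \<otimes> w \<otimes> inv (h [^] (3::int)) = w" using conj_eq_self_iff h w by simp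
      moreover have "h [^] (3::int) \<otimes> w \<otimes> inv (h [^] (3::int)) = inv w" using conj[of 3 1] w by simp
      ultimately have "inv w = w" by (metis (no_types))
      with inv_neq_self_if_ord_0 w w0 show False by blast
    qed
    show "h [^] (2::int) \<otimes> s = s \<otimes> h [^] (2::int)" if "s \<in> {w, h [^] (3::int)}" for s
    proof -
      have "h [^] (2::int) \<otimes> w \<otimes> inv (h [^] (2::int)) = w" using conj[of 2 1] w by simp
      then have "h [^] (2::int) \<otimes> w = w \<otimes> h [^] (2::int)" using conj_eq_self_iff h w by simp
      moreover have "h [^] (2::int) \<otimes> h [^] (3::int) = h [^] (3::int) \<otimes> h [^] (2::int)"
        using h by (simp flip: int_pow_mult)
      ultimately show ?thesis using that by blast
    qed
  qed (use h w in auto)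
  also have "generate G {w, h [^] (3::int)} \<subseteq> {w [^] a \<otimes> h [^] (3 * b) | (a::int) (b::int). True}"
    by (rule generate_inverting_subset[OF h w inverts])
  finally obtain a b :: int where ab: "h [^] (2::int) = w [^] a \<otimes> h [^] (3 * b)" by blast
  have "h [^] (2 - 3 * b) = h [^] (2::int) \<otimes> inv (h [^] (3 * b))" by (rule int_pow_diff[OF h])
  also have "\<dots> = w [^] a" unfolding ab using h w by (simp add: m_assoc)
  finally have wa: "w [^] a = h [^] (2 - 3 * b)" ..
  have "h \<otimes> w [^] a \<otimes> inv h = w [^] a"
    unfolding wa using commute_int_pow[OF h h refl, of 1 "2 - 3 * b"] h
    by (simp add: m_assoc)
  moreover have "h \<otimes> w [^] a \<otimes> inv h = inv (w [^] a)"
    using conj[of 1 a] h w by (simp add: int_pow_neg)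
  ultimately have "inv (w [^] a) = w [^] a" by (metis (no_types))
  then have "ord (w [^] a) \<noteq> 0" using inv_neq_self_if_ord_0[of "w [^] a"] w by auto
  then have "a = 0" using ord_int_pow_eq_0[OF w w0, of a] by auto
  then have "h [^] (2 - 3 * b) = \<one>" using wa by simp
  moreover have "2 - 3 * b \<noteq> 0" by presburger
  ultimately show False using int_pow_eq_one_iff_ord_0[OF h h0] by simp
qed

lemma central_if_conj_int_pow:
  assumes u: "u \<in> carrier G" "ord u = 0"
    and conj: "\<And>h. h \<in> carrier G \<Longrightarrow> \<exists>t::int. h \<otimes> u \<otimes> inv h = u [^] t"
    and h: "h \<in> carrier G"
  shows "u \<otimes> h = h \<otimes> u"
proof -
  obtain t :: int where t: "h \<otimes> u \<otimes> inv h = u [^] t" using conj[OF h] by blast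
  obtain t' :: int where t': "inv h \<otimes> u \<otimes> h = u [^] t'" using conj[OF inv_closed[OF h]] h by auto
  have "t = 1 \<or> t = -1" by (rule conj_exponent_sign[OF u h t t'])
  then show ?thesis
  proof
    assume "t = 1"
    then have "h \<otimes> u \<otimes> inv h = u" using t u(1) by simp
    then have "h \<otimes> u = u \<otimes> h" using conj_eq_self_iff[OF h u(1)] by simp
    then show ?thesis by (rule sym)
  next
    assume "t = -1"
    then have "h \<otimes> u \<otimes> inv h = inv u" using t u(1) by simp
    then show ?thesis using ord_neq_0_if_inverted[OF h u(1)] u(2) by simp
  qed
qed

text \<open>Take the first infinite term \<open>N\<close> of the supersoluble series: it is a finite normal subgroup
  \<open>F\<close> extended by an infinite cyclic group \<open>\<langle>y\<rangle>\<close>. A power \<open>u\<close> of \<open>y\<close> centralizing \<open>F\<close> is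
  conjugated to \<open>u\<^sup>\<plusminus>\<^sup>1\<close> by every element, and \<open>u\<^sup>-\<^sup>1\<close> is ruled out by the absence of inversions.\<close>

lemma central_element_ord_0:
  assumes "infinite (carrier G)" "supersoluble G"
  obtains u where "u \<in> carrier G" "ord u = 0" "\<And>x. x \<in> carrier G \<Longrightarrow> u \<otimes> x = x \<otimes> u"
proof -
  obtain F N where F: "F \<lhd> G" and N: "N \<lhd> G" "F \<subseteq> N"
    and cyc: "cyclic_group ((G\<lparr>carrier := N\<rparr>) Mod F)" and Ffin: "finite F" and Ninf: "infinite N"
    by (rule supersoluble_chain_step[where P = infinite, OF assms(2) _ assms(1)]) auto
  interpret F: normal F G by (rule F)
  have Nsub: "subgroup N G" using N(1) normal_imp_subgroup by blast
  from cyclic_factor_generator[OF F Nsub N(2) cyc]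
  obtain y where y: "y \<in> N" "\<forall>n\<in>N. \<exists>t::int. n \<in> F #> y [^] t" ..
  have yc: "y \<in> carrier G" using subgroup.mem_carrier[OF Nsub y(1)] .
  have y0: "ord y = 0" by (rule ord_eq_0_if_rcosets_cover[OF Ffin yc Ninf y(2)])
  obtain p :: nat where p: "p > 0" "\<And>f. f \<in> F \<Longrightarrow> y [^] p \<otimes> f = f \<otimes> y [^] p"
    using pow_centralizes_finite_normalized[OF Ffin F.subset yc F.inv_op_closed2[OF yc]] by blast
  define v where "v = y [^] int p"
  define u where "u = v [^] int (card F)"
  have vc: "v \<in> carrier G" and uc: "u \<in> carrier G" unfolding u_def v_def using yc by simp_all
  have vF: "v \<otimes> f = f \<otimes> v" if "f \<in> F" for f
    using p(2)[OF that] unfolding v_def by (simp add: int_pow_int)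
  have "card F > 0" using Ffin F.one_closed card_gt_0_iff by blast
  then have u0: "ord u = 0" unfolding u_def v_def using p(1) yc y0 by (simp add: ord_int_pow_eq_0)
  have "\<exists>t::int. h \<otimes> u \<otimes> inv h = u [^] t" if h: "h \<in> carrier G" for h
  proof -
    obtain t :: int where "h \<otimes> y \<otimes> inv h \<in> F #> y [^] t"
      using y(2) normal.inv_op_closed2[OF N(1) h y(1)] by blast
    then have "h \<otimes> v \<otimes> inv h \<in> F #> v [^] t" unfolding v_def
      by (rule F.conj_int_pow_mem_rcos[OF h yc])
    then show ?thesis using conj_pow_card_eq[OF F Ffin vc vF h] unfolding u_def by blast
  qed
  then have "u \<otimes> h = h \<otimes> u" if "h \<in> carrier G" for h
    using central_if_conj_int_pow[OF uc u0] that by blast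
  then show thesis using that uc u0 by blast
qed

end

locale self_centralizing_group_with_center = self_centralizing_group +
  fixes u
  assumes u_closed: "u \<in> carrier G" and ord_u: "ord u = 0"
    and u_central: "x \<in> carrier G \<Longrightarrow> u \<otimes> x = x \<otimes> u"
begin

lemma finite_subgroup_commute:
  assumes H: "subgroup H G" "finite H" and xy: "x \<in> H" "y \<in> H"
  shows "x \<otimes> y = y \<otimes> x"
proof (rule ccontr)
  assume "x \<otimes> y \<noteq> y \<otimes> x"
  then have "centralizer G H \<subseteq> H" by (rule centralizer_subset[OF H(1) xy])
  moreover have "u \<in> centralizer G H"
    using u_closed u_central subgroup.mem_carrier[OF H(1)] unfolding centralizer_def by blast
  ultimately have "u \<in> H" by blast
  then show False using ord_neq_0_finite_subgroup[OF H] ord_u by blast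
qed

text \<open>Some \<open>h\<^sup>p\<close> centralizes \<open>F\<close>; it would lie in the non-abelian subgroup \<open>\<langle>h\<^sup>p\<^sup>+\<^sup>1, F\<rangle>\<close>, whose
  elements are \<open>h\<^sup>(\<^sup>p\<^sup>+\<^sup>1\<^sup>)\<^sup>s f\<close>, so that \<open>h\<close> would have finite order.\<close>

lemma normalizing_centralizes_finite_subgroup_if_ord_0:
  assumes F: "subgroup F G" "finite F" and h: "h \<in> carrier G" "\<And>f. f \<in> F \<Longrightarrow> h \<otimes> f \<otimes> inv h \<in> F"
    and h0: "ord h = 0" and f: "f \<in> F"
  shows "h \<otimes> f = f \<otimes> h"
proof (rule ccontr)
  assume nc: "h \<otimes> f \<noteq> f \<otimes> h"
  have Fc: "F \<subseteq> carrier G" using F(1) subgroup.subset by blast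
  have fc: "f \<in> carrier G" using f Fc by blast
  obtain p :: nat where p: "p > 0" "\<And>f. f \<in> F \<Longrightarrow> h [^] p \<otimes> f = f \<otimes> h [^] p"
    using pow_centralizes_finite_normalized[OF F(2) Fc h] by blast
  let ?c = "h [^] int p" and ?g = "h [^] (int p + 1)"
  have cF: "?c \<otimes> f' = f' \<otimes> ?c" if "f' \<in> F" for f' using p(2)[OF that] by (simp add: int_pow_int)
  have g: "?g = ?c \<otimes> h" using h(1) by (simp add: int_pow_mult)
  have gF: "?g \<otimes> f' \<otimes> inv ?g \<in> F" if "f' \<in> F" for f'
    using int_pow_conj_mem[OF F(2) Fc h that] .
  have "?c \<in> generate G (insert ?g F)"
  proof (rule mem_generate_if_centralizes)
    show "?g \<otimes> f \<noteq> f \<otimes> ?g"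
    proof
      assume comm: "?g \<otimes> f = f \<otimes> ?g"
      have "?c \<otimes> (h \<otimes> f) = ?g \<otimes> f" unfolding g using h(1) fc by (simp add: m_assoc)
      also have "\<dots> = f \<otimes> ?g" by (rule comm)
      also have "\<dots> = (f \<otimes> ?c) \<otimes> h" unfolding g using h(1) fc by (simp add: m_assoc)
      also have "\<dots> = ?c \<otimes> (f \<otimes> h)" using cF[OF f, symmetric] h(1) fc by (simp add: m_assoc)
      finally show False using nc h(1) fc by simp
    qed
    show "?c \<otimes> s = s \<otimes> ?c" if "s \<in> insert ?g F" for s
      using that cF h(1) by (auto simp flip: int_pow_mult simp: add.commute)
  qed (use f h(1) Fc in auto)
  then obtain s :: int and f' where f': "?c = ?g [^] s \<otimes> f'" "f' \<in> F"
    using generate_insert_normalizing[OF F int_pow_closed[OF h(1)] gF] by blast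
  have f'c: "f' \<in> carrier G" using f'(2) Fc by blast
  have "f' = inv (?g [^] s) \<otimes> ?c"
    using inv_solve_left[OF f'c int_pow_closed[OF int_pow_closed[OF h(1)]] int_pow_closed[OF h(1)],
        THEN iffD2, OF f'(1)] .
  also have "\<dots> = h [^] (- ((int p + 1) * s) + int p)"
    unfolding int_pow_pow[OF h(1)] by (simp only: int_pow_mult[OF h(1)] int_pow_neg[OF h(1)])
  finally have f'_pow: "f' = h [^] (- ((int p + 1) * s) + int p)" .
  have "- ((int p + 1) * s) + int p \<noteq> 0"
  proof
    assume "- ((int p + 1) * s) + int p = 0"
    then have "int p = (int p + 1) * s" by simp
    then have "int p + 1 dvd int p" by (rule dvdI)
    then show False using zdvd_imp_le[of "int p + 1" "int p"] p(1) by simp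
  qed
  then have "ord f' = 0" unfolding f'_pow using ord_int_pow_eq_0[OF h(1) h0] by blast
  then show False using ord_neq_0_finite_subgroup[OF F f'(2)] by contradiction
qed

lemma normalizing_centralizes_finite_subgroup:
  assumes F: "subgroup F G" "finite F" and h: "h \<in> carrier G" "\<And>f. f \<in> F \<Longrightarrow> h \<otimes> f \<otimes> inv h \<in> F"
    and f: "f \<in> F"
  shows "h \<otimes> f = f \<otimes> h"
proof (cases "ord h = 0")
  case True
  show ?thesis by (rule normalizing_centralizes_finite_subgroup_if_ord_0[OF F h True f])
next
  case False
  have "subgroup (generate G (insert h F)) G"
    using h(1) subgroup.subset[OF F(1)] by (intro generate_is_subgroup) auto
  moreover have "finite (generate G (insert h F))"
    by (rule finite_generate_insert_normalizing[OF F h False])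
  moreover have "h \<in> generate G (insert h F)" "f \<in> generate G (insert h F)"
    using f by (auto intro: generate.incl)
  ultimately show ?thesis by (rule finite_subgroup_commute)
qed

end

locale self_centralizing_commutator_triple =
  self_centralizing_group_with_center + commutator_triple
begin

text \<open>A commutator \<open>d\<close> of infinite order would centralize the non-abelian subgroup
  \<open>\<langle>a\<^sup>2, b\<^sup>2\<rangle>\<close>, all of whose elements are words \<open>a\<^sup>x b\<^sup>y d\<^sup>z\<close> with \<open>x, y\<close> even and \<open>4 dvd z\<close>.\<close>

lemma ord_commutator_neq_0: "ord d \<noteq> 0"
proof
  assume d0: "ord d = 0"
  have "d \<in> generate G {a [^] (2::int), b [^] (2::int)}"
  proof (rule mem_generate_if_centralizes)
    show "a [^] (2::int) \<otimes> b [^] (2::int) \<noteq> b [^] (2::int) \<otimes> a [^] (2::int)"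
      using int_pow_a_int_pow_b_commute_iff[of 2] int_pow_eq_one_iff_ord_0[OF d_closed d0, of 4]
        by simp
    show "d \<otimes> s = s \<otimes> d" if "s \<in> {a [^] (2::int), b [^] (2::int)}" for s
      using that commute_int_pow[OF d_closed a_closed ad_commute[symmetric], of 1 2]
        commute_int_pow[OF d_closed b_closed bd_commute[symmetric], of 1 2] by auto
  qed auto
  then obtain x y z where w: "d = word x y z" "2 dvd x" "2 dvd y" "2 * 2 dvd z"
    using generate_pow_subset_words[of 2] by blast
  have "a [^] x \<otimes> b [^] y = d \<otimes> inv (d [^] z)"
    using inv_solve_right[of "a [^] x \<otimes> b [^] y" d "d [^] z", THEN iffD2] w(1) unfolding word_def
    by simp
  then have "a [^] x \<otimes> b [^] y = d [^] (1 - z)" by (simp add: int_pow_diff)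
  then have "x = 0" "y = 0"
    using d_pow_trivial_if_word_central int_pow_eq_one_iff_ord_0[OF d_closed d0] by blast+
  then have "d [^] (1::int) = d [^] z" using w(1) by (simp add: word_generators)
  then have "z = 1" using int_pow_eq[OF d_closed, of 1 z] d0 by simp
  then show False using w(4) by simp
qed

text \<open>If \<open>d\<close> has order \<open>Q\<close>, choose \<open>D > 0\<close> with \<open>b\<^sup>D \<in> \<langle>a, d\<rangle>\<close>, if there is one. For
  \<open>R = QD + 1\<close> the element \<open>a\<^sup>Q\<close> centralizes the non-abelian subgroup \<open>\<langle>a\<^sup>R, b\<^sup>R\<rangle>\<close>.\<close>

lemma commutator_trivial_if_ord_a_eq_0:
  assumes a0: "ord a = 0"
  shows "d = \<one>"
proof (rule ccontr)
  assume d1: "d \<noteq> \<one>"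
  define Q where "Q = int (ord d)"
  have Q: "Q > 0" using ord_commutator_neq_0 unfolding Q_def by simp
  have dQ: "d [^] (Q * k) = \<one>" for k :: int unfolding Q_def by (simp add: int_pow_eq_id)
  obtain D :: int where D: "D > 0" "\<And>y::int. y \<noteq> 0 \<Longrightarrow> b [^] y \<in> ad_products \<Longrightarrow> b [^] D \<in> ad_products"
    using subgroup_pos_pow_mem[OF subgroup_ad_products b_closed] by blast
  define R where "R = Q * D + 1"
  have mem: "a [^] Q \<in> generate G {a [^] R, b [^] R}"
  proof (rule mem_generate_if_centralizes)
    have "R * R = Q * (D * (Q * D + 2)) + 1" unfolding R_def by (simp add: algebra_simps)
    then have "d [^] (R * R) = d" using dQ by (simp add: int_pow_mult)
    then show "a [^] R \<otimes> b [^] R \<noteq> b [^] R \<otimes> a [^] R"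
      using int_pow_a_int_pow_b_commute_iff[of R] d1 by simp
    have "b [^] R \<otimes> a [^] Q = a [^] Q \<otimes> b [^] R" using int_pow_b_int_pow_a[of R Q] dQ by simp
    then show "a [^] Q \<otimes> s = s \<otimes> a [^] Q" if "s \<in> {a [^] R, b [^] R}" for s
      using that commute_int_pow[OF a_closed a_closed refl, of Q R] by auto
  qed auto
  have coprime: "coprime R D" using coprime_add_one_left[of "Q * D"] unfolding R_def by simp
  have "R dvd Q"
    by (rule dvd_if_int_pow_a_mem_generate[OF a0 ord_commutator_neq_0 coprime D(2) mem])
  moreover have "Q < R" using Q D(1) mult_left_mono[of 1 D Q] unfolding R_def by simp
  ultimately show False using zdvd_imp_le[of R Q] Q by simp
qed

lemma commutator_trivial_if_ord_a_neq_0: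
  assumes "ord a \<noteq> 0"
  shows "d = \<one>"
proof -
  let ?F = ad_products
  have mem: "a [^] x \<otimes> d [^] z \<in> ?F" for x z :: int unfolding ad_products_def by blast
  have "b \<otimes> a = a \<otimes> b"
  proof (rule normalizing_centralizes_finite_subgroup)
    show "subgroup ?F G" by (rule subgroup_ad_products)
    show "finite ?F"
      unfolding ad_products_def
        by (rule finite_int_pow_prod[OF a_closed assms d_closed ord_commutator_neq_0])
    show "b \<otimes> f \<otimes> inv b \<in> ?F" if fF: "f \<in> ?F" for f
    proof -
      obtain x z :: int where f: "f = a [^] x \<otimes> d [^] z" using fF unfolding ad_products_def by blast
      have "b \<otimes> f \<otimes> inv b = (b \<otimes> a [^] x) \<otimes> d [^] z \<otimes> inv b" unfolding f by (simp add: m_assoc)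
      also have "\<dots> = a [^] x \<otimes> (b \<otimes> d [^] (x + z)) \<otimes> inv b"
        using int_pow_b_int_pow_a[of 1 x] by (simp add: m_assoc int_pow_mult)
      also have "\<dots> = a [^] x \<otimes> d [^] (x + z)"
        using commute_int_pow[OF b_closed d_closed bd_commute, of 1 "x + z"] by (simp add: m_assoc)
      finally show ?thesis using mem by simp
    qed
    show "a \<in> ?F" using mem[of 1 0] by simp
  qed (rule b_closed)
  then have "a \<otimes> d \<otimes> b = a \<otimes> b" using commutator by simp
  then show ?thesis by (simp add: m_assoc)
qed

lemma commutator_trivial: "d = \<one>"
  using commutator_trivial_if_ord_a_eq_0 commutator_trivial_if_ord_a_neq_0 by blast

end

context self_centralizing_group_with_center
begin

lemma commute_if_conj_pow_of_finite_ord: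
  assumes b: "b \<in> carrier G" and d: "d \<in> carrier G" "ord d \<noteq> 0"
    and conj: "b \<otimes> d \<otimes> inv b = d [^] (k::int)"
  shows "b \<otimes> d = d \<otimes> b"
proof (rule normalizing_centralizes_finite_subgroup[OF generate_is_subgroup[of "{d}"] _ b])
  have "0 < card (generate G {d})" using generate_pow_card[OF d(1)] d(2) by simp
  then show "finite (generate G {d})" by (rule card_ge_0_finite)
  show "b \<otimes> f \<otimes> inv b \<in> generate G {d}" if f: "f \<in> generate G {d}" for f
  proof -
    obtain n :: int where "f = d [^] n" using f generate_pow[OF d(1)] by blast
    then have "b \<otimes> f \<otimes> inv b = d [^] (k * n)" using conj_int_pow[OF b d(1), of n] conj d(1)
      by (simp add: int_pow_pow)
    then show ?thesis using generate_pow[OF d(1)] by blast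
  qed
qed (use d(1) in \<open>auto intro: generate.incl\<close>)

text \<open>With \<open>d = z a\<^sup>k\<^sup>-\<^sup>1\<close> we have \<open>b a = a d b\<close> and \<open>b d b\<^sup>-\<^sup>1 = d\<^sup>k\<close>. When \<open>d\<close> has infinite
  order and does not commute with \<open>b\<close>, no nonzero power of \<open>a\<close> lies in \<open>Z\<close>; this forces
  \<open>k k' = 1\<close>, so \<open>b\<close> inverts \<open>d\<close>.\<close>

lemma commute_if_normalizes_mod_central:
  assumes Z: "subgroup Z G" "\<And>z x. z \<in> Z \<Longrightarrow> x \<in> carrier G \<Longrightarrow> z \<otimes> x = x \<otimes> z"
    and a: "a \<in> carrier G" and b: "b \<in> carrier G"
    and z: "z \<in> Z" "b \<otimes> a \<otimes> inv b = z \<otimes> a [^] (k::int)"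
    and z': "z' \<in> Z" "inv b \<otimes> a \<otimes> b = z' \<otimes> a [^] (k'::int)"
  shows "b \<otimes> a = a \<otimes> b"
proof -
  have zc: "z \<in> carrier G" using subgroup.mem_carrier[OF Z(1) z(1)] .
  define d where "d = z \<otimes> a [^] (k - 1)"
  have dc: "d \<in> carrier G" unfolding d_def using zc a by simp
  note triple = conj_eq_central_mult_pow[OF a b zc Z(2)[OF z(1)] z(2), folded d_def]
  have "d = \<one>"
  proof (cases "b \<otimes> d = d \<otimes> b")
    case True
    interpret self_centralizing_commutator_triple G u a b d
      by unfold_locales (use a b dc triple True in auto)
    show ?thesis by (rule commutator_trivial)
  next
    case bd: False
    have d0: "ord d = 0" using commute_if_conj_pow_of_finite_ord[OF b dc _ triple(3)] bd by blast
    have no_central_pow: "n = 0" if "a [^] n \<in> Z" for n :: int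
    proof -
      have "b \<otimes> a [^] n \<otimes> inv b = a [^] n"
        using Z(2)[OF that b, symmetric] a b by (simp add: m_assoc)
      moreover have "b \<otimes> a [^] n \<otimes> inv b = a [^] n \<otimes> d [^] n"
        using conj_int_pow[OF b a, of n] triple(1,2) int_pow_mult_distrib[OF triple(2) a dc] a b dc
        by (simp add: m_assoc)
      ultimately have "d [^] n = \<one>" using a dc by simp
      then show ?thesis using int_pow_eq_one_iff_ord_0[OF dc d0] by simp
    qed
    have "a [^] (k * k' - 1) \<in> Z" by (rule int_pow_mem_if_conj_inv_conj[OF Z b a z z'])
    then have "k * k' = 1" using no_central_pow by fastforce
    then have "k = 1 \<or> k = -1" by (rule pos_zmult_eq_1_iff_lemma)
    then show ?thesis
    proof
      assume "k = 1"
      then have "b \<otimes> d \<otimes> inv b = d" using triple(3) dc by simp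
      then show ?thesis using conj_eq_self_iff[OF b dc] bd by simp
    next
      assume "k = -1"
      then have "b \<otimes> d \<otimes> inv b = inv d" using triple(3) dc by simp
      then show ?thesis using ord_neq_0_if_inverted[OF b dc] d0 by simp
    qed
  qed
  then show ?thesis using triple(1) a b by simp
qed

text \<open>Take the first term \<open>A\<close> of the supersoluble series that is not central. It is a central
  subgroup \<open>Z\<^sub>0\<close> extended by a cyclic group \<open>\<langle>a\<rangle>\<close>, and any \<open>b\<close> not commuting with \<open>a\<close>
  would normalize \<open>\<langle>a\<rangle>\<close> modulo \<open>Z\<^sub>0\<close>.\<close>

lemma commute_if_supersoluble:
  assumes ss: "supersoluble G" and x: "x \<in> carrier G" and y: "y \<in> carrier G"
  shows "x \<otimes> y = y \<otimes> x"
proof (rule ccontr)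
  assume nc: "x \<otimes> y \<noteq> y \<otimes> x"
  let ?Z = "centralizer G (carrier G)"
  have Zsub: "subgroup ?Z G" by (rule subgroup_centralizer) simp
  obtain Z0 A where Z0: "Z0 \<lhd> G" and A: "A \<lhd> G" "Z0 \<subseteq> A"
    and cyc: "cyclic_group ((G\<lparr>carrier := A\<rparr>) Mod Z0)" and Z0Z: "Z0 \<subseteq> ?Z" and AZ: "\<not> A \<subseteq> ?Z"
    by (rule supersoluble_chain_step[where P = "\<lambda>H. \<not> H \<subseteq> ?Z", OF ss])
      (use x y nc in \<open>auto simp: centralizer_def\<close>)
  have Asub: "subgroup A G" using A(1) normal_imp_subgroup by blast
  have central: "z \<otimes> g = g \<otimes> z" if "z \<in> Z0" "g \<in> carrier G" for z g
    using that Z0Z unfolding centralizer_def by blast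
  from cyclic_factor_generator[OF Z0 Asub A(2) cyc]
  obtain a where a: "a \<in> A" "\<forall>n\<in>A. \<exists>t::int. n \<in> Z0 #> a [^] t" ..
  have ac: "a \<in> carrier G" using subgroup.mem_carrier[OF Asub a(1)] .
  have "a \<notin> ?Z"
  proof
    assume aZ: "a \<in> ?Z"
    have "A \<subseteq> ?Z"
    proof
      fix n assume "n \<in> A"
      then obtain t :: int and z where "z \<in> Z0" "n = z \<otimes> a [^] t"
        using a(2) unfolding r_coset_def by blast
      then show "n \<in> ?Z"
        using subgroup.m_closed[OF Zsub] subgroup_int_pow_closed[OF Zsub aZ] Z0Z by blast
    qed
    then show False using AZ by contradiction
  qed
  then obtain b where b: "b \<in> carrier G" "b \<otimes> a \<noteq> a \<otimes> b" using ac unfolding centralizer_def by auto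
  obtain z and k :: int where z: "z \<in> Z0" "b \<otimes> a \<otimes> inv b = z \<otimes> a [^] k"
    using a(2) normal.inv_op_closed2[OF A(1) b(1) a(1)] unfolding r_coset_def by blast
  obtain z' and k' :: int where z': "z' \<in> Z0" "inv b \<otimes> a \<otimes> b = z' \<otimes> a [^] k'"
    using a(2) normal.inv_op_closed1[OF A(1) b(1) a(1)] unfolding r_coset_def by blast
  have "b \<otimes> a = a \<otimes> b"
    by (rule commute_if_normalizes_mod_central[OF normal_imp_subgroup[OF Z0] central ac b(1) z z'])
  then show False using b(2) by contradiction
qed

end

theorem theorem4p1:
  fixes G :: "('a, 'b) monoid_scheme"
  assumes "group G"
    and "infinite (carrier G)"
    and "supersoluble G"
    and "\<forall>x \<in> carrier G. x [^]\<^bsub>G\<^esub> (2::nat) = \<one>\<^bsub>G\<^esub> \<longrightarrow> x = \<one>\<^bsub>G\<^esub>"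
    and "\<forall>H. subgroup H G \<and> \<not> (\<forall>x\<in>H. \<forall>y\<in>H. x \<otimes>\<^bsub>G\<^esub> y = y \<otimes>\<^bsub>G\<^esub> x)
               \<longrightarrow> centralizer G H \<subseteq> H"
  shows "comm_group G"
proof -
  have sc: "self_centralizing_group G"
    by (intro self_centralizing_group.intro self_centralizing_group_axioms.intro assms(1))
      (use assms(4,5) in blast)+
  interpret self_centralizing_group G by (rule sc)
  obtain u where u: "u \<in> carrier G" "ord u = 0" "\<And>x. x \<in> carrier G \<Longrightarrow> u \<otimes>\<^bsub>G\<^esub> x = x \<otimes>\<^bsub>G\<^esub> u"
    using central_element_ord_0[OF assms(2,3)] by blast
  interpret self_centralizing_group_with_center G u
    by (intro self_centralizing_group_with_center.intro
        self_centralizing_group_with_center_axioms.intro sc)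
      (use u in auto)
  show ?thesis by (rule group_comm_groupI) (rule commute_if_supersoluble[OF assms(3)])
qed

end
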